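(* Let $Y$ be a random variable whose moment generating function $E[e^{tY}]$ exists for $|t|<r_0$ for some $r_0>0$. Let $(Y_j)_{j\ge1}$ be mutually independent copies of $Y$, $S_0=0$, $S_k=Y_1+\cdots+Y_k$ for $k\ge1$. Define the probabilistic bivariate Bell polynomials $\phi_n^Y(x,y)$ by $$\Big(1+y\big(E[e^{Yt}]-1\big)\Big)^{x}=\sum_{n=0}^{\infty}\phi_n^Y(x,y)\frac{t^n}{n!}.$$ Then for every $n\ge 0$, $$\phi_n^Y(x,y)=\sum_{k=0}^{n}{n\brace k}_Y (x)_k\, y^k,$$ where ${n\brace k}_Y=\frac{1}{k!}\sum_{i=0}^{k}\binom{k}{i}(-1)^{k-i}E[S_i^n]$ for $0\le k\le n$.
   Context: $(x)_0=1$, $(x)_k=x(x-1)\cdots(x-k+1)$ for $k\ge1$. The power $(1+u)^x$ is understood via the binomial series $\sum_{k\ge0}\binom{x}{k}u^k$, and the identity is one of power series in $t$; $x,y$ are variables. The numbers ${n\brace k}_Y$ are the probabilistic Stirling numbers of the second kind associated with $Y$. *)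

theory Defs
  imports "HOL-Probability.Probability" "HOL-Computational_Algebra.Formal_Power_Series"
begin

definition falling_fact :: "real \<Rightarrow> nat \<Rightarrow> real" where
  "falling_fact x k = (\<Prod>i<k. x - real i)"

definition mgf :: "'a measure \<Rightarrow> ('a \<Rightarrow> real) \<Rightarrow> real \<Rightarrow> real" where
  "mgf M Y t = (\<integral>\<omega>. exp (t * Y \<omega>) \<partial>M)"

definition mgf_fps :: "'a measure \<Rightarrow> ('a \<Rightarrow> real) \<Rightarrow> real fps" where
  "mgf_fps M Y = Abs_fps (\<lambda>n. (deriv ^^ n) (mgf M Y) 0 / fact n)"

text \<open>Generating series (1 + y(E[e^{Yt}] - 1))^x, the power understood via
  the binomial series sum_k (x choose k) u^k with u = y(E[e^{Yt}] - 1).\<close>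
definition bell_gf :: "'a measure \<Rightarrow> ('a \<Rightarrow> real) \<Rightarrow> real \<Rightarrow> real \<Rightarrow> real fps" where
  "bell_gf M Y x y = fps_binomial x oo (fps_const y * (mgf_fps M Y - 1))"

definition prob_bell :: "'a measure \<Rightarrow> ('a \<Rightarrow> real) \<Rightarrow> nat \<Rightarrow> real \<Rightarrow> real \<Rightarrow> real" where
  "prob_bell M Y n x y = fact n * fps_nth (bell_gf M Y x y) n"

definition partial_sum :: "(nat \<Rightarrow> 'a \<Rightarrow> real) \<Rightarrow> nat \<Rightarrow> 'a \<Rightarrow> real" where
  "partial_sum Ys k \<omega> = (\<Sum>j=1..k. Ys j \<omega>)"

definition prob_stirling :: "'a measure \<Rightarrow> (nat \<Rightarrow> 'a \<Rightarrow> real) \<Rightarrow> nat \<Rightarrow> nat \<Rightarrow> real" where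
  "prob_stirling M Ys n k = (1 / fact k) *
     (\<Sum>i=0..k. real (k choose i) * (-1) ^ (k - i) * (\<integral>\<omega>. (partial_sum Ys i \<omega>) ^ n \<partial>M))"

end

theory Submission
  imports Defs "HOL-Analysis.FPS_Convergence"
begin

(*
  For |t| < r0 the series e^(tY) = \<Sum>k (tY)^k / k! is dominated by the integrable e^|tY|, so it
  may be integrated termwise: the moment generating function is analytic at 0 with Taylor series
  F(t) = \<Sum>k E[Y^k] t^k / k!. The binomial theorem and independence make the moment series of
  S_(i+1) = S_i + Y_(i+1) the product of those of S_i and Y_(i+1), hence [t^n] F^i = E[S_i^n] / n!.
  Composing the binomial series with y (F - 1) and expanding (F - 1)^k binomially, the coefficient
  of t^n becomes \<Sum>k (x gchoose k) y^k \<Sum>i (k choose i) (-1)^(k-i) E[S_i^n] / n!, and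
  x gchoose k = (x)_k / k!.
*)

(* The library states this (fps_nth_conv_deriv) for complex power series only. *)
lemma fps_nth_conv_higher_deriv:
  fixes f :: "'a :: {banach, real_normed_field} fps"
  assumes "fps_conv_radius f > 0"
  shows   "fps_nth f n = (deriv ^^ n) (eval_fps f) 0 / fact n"
  using assms
proof (induction n arbitrary: f)
  case 0
  thus ?case by (simp add: eval_fps_def)
next
  case (Suc n f)
  have "eventually (\<lambda>z::'a. z \<in> eball 0 (fps_conv_radius f)) (nhds 0)"
    using Suc.prems by (intro eventually_nhds_in_open) (auto simp: zero_ereal_def)
  hence "eventually (\<lambda>z. deriv (eval_fps f) z = eval_fps (fps_deriv f) z) (nhds 0)"
    by eventually_elim (simp add: eval_fps_deriv)
  hence "(deriv ^^ Suc n) (eval_fps f) 0 = (deriv ^^ n) (eval_fps (fps_deriv f)) 0"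
    unfolding funpow_Suc_right o_def by (intro higher_deriv_cong_ev refl)
  also have "\<dots> = fact n * fps_nth (fps_deriv f) n"
    using Suc.prems fps_conv_radius_deriv[of f] Suc.IH[of "fps_deriv f"] by auto
  finally show ?case
    by (simp add: fps_deriv_def field_split_simps del: of_nat_Suc)
qed

lemma fps_nth_has_fps_expansion:
  fixes f :: "'a :: {banach, real_normed_field} \<Rightarrow> 'a"
  assumes "f has_fps_expansion F"
  shows   "fps_nth F n = (deriv ^^ n) f 0 / fact n"
proof -
  have "fps_nth F n = (deriv ^^ n) (eval_fps F) 0 / fact n"
    using assms by (intro fps_nth_conv_higher_deriv) (auto simp: has_fps_expansion_def)
  also have "(deriv ^^ n) (eval_fps F) 0 = (deriv ^^ n) f 0"
    using assms by (intro higher_deriv_cong_ev) (auto simp: has_fps_expansion_def)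
  finally show ?thesis .
qed

lemma sum_power_div_fact_le_exp:
  fixes z :: real
  assumes "z \<ge> 0" and "finite I"
  shows "(\<Sum>i\<in>I. z ^ i / fact i) \<le> exp z"
proof -
  have exp_sums: "(\<lambda>i. z ^ i / fact i) sums exp z"
    using exp_converges[of z] by (simp add: divide_inverse mult.commute)
  show ?thesis
    using assms sum_le_suminf[OF sums_summable[OF exp_sums] assms(2)] sums_unique[OF exp_sums]
    by auto
qed

lemma fps_nth_power_minus_one:
  fixes F :: "'a :: comm_ring_1 fps"
  shows "fps_nth ((F - 1) ^ k) n = (\<Sum>i\<le>k. of_nat (k choose i) * (- 1) ^ (k - i) * fps_nth (F ^ i) n)"
proof -
  have "(F - 1) ^ k = (\<Sum>i\<le>k. fps_const (of_nat (k choose i) * (- 1) ^ (k - i)) * F ^ i)"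
    using binomial_ring[of F "- 1" k]
    by (simp add: fps_of_nat mult_ac flip: fps_const_mult fps_const_power fps_const_neg)
  thus ?thesis by (simp add: fps_sum_nth)
qed

lemma fps_nth_binomial_compose:
  fixes F :: "real fps"
  shows "fps_nth (fps_binomial x oo (fps_const y * (F - 1))) n =
    (\<Sum>k=0..n. (x gchoose k) * y ^ k * (\<Sum>i\<le>k. real (k choose i) * (- 1) ^ (k - i) * fps_nth (F ^ i) n))"
  by (simp add: fps_compose_nth power_mult_distrib fps_nth_power_minus_one mult.assoc)

lemma falling_fact_div_fact: "falling_fact x k / fact k = x gchoose k"
  using gbinomial_mult_fact[of k x]
  by (simp add: falling_fact_def lessThan_atLeast0 field_simps)

definition moment_fps :: "'a measure \<Rightarrow> ('a \<Rightarrow> real) \<Rightarrow> real fps" where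
  "moment_fps M X = Abs_fps (\<lambda>k. (\<integral>\<omega>. X \<omega> ^ k \<partial>M) / fact k)"

lemma integrable_comp_eq_if_distr_eq:
  fixes X Z :: "'a \<Rightarrow> 'b :: topological_space" and f :: "'b \<Rightarrow> real"
  assumes "X \<in> borel_measurable M" "Z \<in> borel_measurable M" "f \<in> borel_measurable borel"
    and "distr M borel X = distr M borel Z"
  shows "integrable M (\<lambda>\<omega>. f (X \<omega>)) \<longleftrightarrow> integrable M (\<lambda>\<omega>. f (Z \<omega>))"
  using assms by (metis integrable_distr_eq)

lemma integral_comp_eq_if_distr_eq:
  fixes X Z :: "'a \<Rightarrow> 'b :: topological_space" and f :: "'b \<Rightarrow> real"
  assumes "X \<in> borel_measurable M" "Z \<in> borel_measurable M" "f \<in> borel_measurable borel"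
    and "distr M borel X = distr M borel Z"
  shows "(\<integral>\<omega>. f (X \<omega>) \<partial>M) = (\<integral>\<omega>. f (Z \<omega>) \<partial>M)"
  using assms by (metis integral_distr)

lemma moment_fps_eq_if_distr_eq:
  fixes X Z :: "'a \<Rightarrow> real"
  assumes "X \<in> borel_measurable M" "Z \<in> borel_measurable M"
    and "distr M borel X = distr M borel Z"
  shows "moment_fps M X = moment_fps M Z"
  using integral_comp_eq_if_distr_eq[OF assms(1,2) _ assms(3), of "\<lambda>z. z ^ _"]
  by (simp add: moment_fps_def)

lemma partial_sum_0 [simp]: "partial_sum Ys 0 = (\<lambda>_. 0)"
  by (simp add: partial_sum_def fun_eq_iff)

lemma partial_sum_Suc: "partial_sum Ys (Suc i) = (\<lambda>\<omega>. partial_sum Ys i \<omega> + Ys (Suc i) \<omega>)"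
  by (simp add: partial_sum_def fun_eq_iff)

context prob_space
begin

lemma integrable_exp_abs_mult:
  fixes Y :: "'a \<Rightarrow> real"
  assumes "\<And>t. \<bar>t\<bar> < r \<Longrightarrow> integrable M (\<lambda>\<omega>. exp (t * Y \<omega>))" and "\<bar>t\<bar> < r"
  shows "integrable M (\<lambda>\<omega>. exp \<bar>t * Y \<omega>\<bar>)"
proof -
  have "integrable M (\<lambda>\<omega>. max (exp (t * Y \<omega>)) (exp ((- t) * Y \<omega>)))"
    using assms(1)[of t] assms(1)[of "- t"] assms(2) by (intro integrable_max) auto
  moreover have "exp \<bar>z\<bar> = max (exp z) (exp (- z))" for z :: real
    by (cases "z \<ge> 0") auto
  ultimately show ?thesis by simp
qed

lemma integrable_power_if_mgf:
  fixes Y :: "'a \<Rightarrow> real"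
  assumes Y: "Y \<in> borel_measurable M" and "r > 0"
    and mgf: "\<And>t. \<bar>t\<bar> < r \<Longrightarrow> integrable M (\<lambda>\<omega>. exp (t * Y \<omega>))"
  shows "integrable M (\<lambda>\<omega>. Y \<omega> ^ k)"
proof -
  define s where "s = r / 2"
  have s: "s > 0" "\<bar>s\<bar> < r" using \<open>r > 0\<close> by (auto simp: s_def)
  have bound_integrable: "integrable M (\<lambda>\<omega>. fact k / s ^ k * exp \<bar>s * Y \<omega>\<bar>)"
    using integrable_exp_abs_mult[OF mgf s(2)] by auto
  show ?thesis
  proof (rule Bochner_Integration.integrable_bound[OF bound_integrable])
    show "(\<lambda>\<omega>. Y \<omega> ^ k) \<in> borel_measurable M" using Y by measurable
    show "AE \<omega> in M. norm (Y \<omega> ^ k) \<le> norm (fact k / s ^ k * exp \<bar>s * Y \<omega>\<bar>)"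
    proof (intro AE_I2)
      fix \<omega>
      have "\<bar>s * Y \<omega>\<bar> ^ k / fact k \<le> exp \<bar>s * Y \<omega>\<bar>"
        using sum_power_div_fact_le_exp[of "\<bar>s * Y \<omega>\<bar>" "{k}"] by simp
      thus "norm (Y \<omega> ^ k) \<le> norm (fact k / s ^ k * exp \<bar>s * Y \<omega>\<bar>)"
        using s by (simp add: abs_mult power_abs power_mult_distrib field_simps)
    qed
  qed
qed

lemma mgf_sums_moments:
  fixes Y :: "'a \<Rightarrow> real"
  assumes Y: "Y \<in> borel_measurable M" and "r > 0"
    and mgf: "\<And>t. \<bar>t\<bar> < r \<Longrightarrow> integrable M (\<lambda>\<omega>. exp (t * Y \<omega>))"
    and t: "\<bar>t\<bar> < r"
  shows "(\<lambda>k. (\<integral>\<omega>. Y \<omega> ^ k \<partial>M) / fact k * t ^ k) sums mgf M Y t"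
proof -
  define f where "f k \<omega> = (t * Y \<omega>) ^ k / fact k" for k \<omega>
  have f_eq: "f k = (\<lambda>\<omega>. (t ^ k / fact k) * Y \<omega> ^ k)" for k
    by (auto simp: f_def power_mult_distrib)
  have f_integrable: "integrable M (f k)" for k
    unfolding f_eq using integrable_power_if_mgf[OF Y \<open>r > 0\<close> mgf] by auto
  have f_sums: "(\<lambda>k. f k \<omega>) sums exp (t * Y \<omega>)" for \<omega>
    using exp_converges[of "t * Y \<omega>"] by (simp add: f_def divide_inverse mult.commute)
  have norm_summable: "summable (\<lambda>k. norm (f k \<omega>))" for \<omega>
    using exp_converges[of "\<bar>t * Y \<omega>\<bar>"]
    by (simp add: f_def sums_iff divide_inverse mult.commute power_abs abs_mult)
  have integral_norm_summable: "summable (\<lambda>k. \<integral>\<omega>. norm (f k \<omega>) \<partial>M)"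
  proof (rule bounded_imp_summable)
    fix n
    have "(\<Sum>k\<le>n. \<integral>\<omega>. norm (f k \<omega>) \<partial>M) = (\<integral>\<omega>. (\<Sum>k\<le>n. norm (f k \<omega>)) \<partial>M)"
      using f_integrable by (intro Bochner_Integration.integral_sum[symmetric]) auto
    also have "\<dots> \<le> (\<integral>\<omega>. exp \<bar>t * Y \<omega>\<bar> \<partial>M)"
      using sum_power_div_fact_le_exp[of "\<bar>t * Y _\<bar>" "{..n}"]
      by (intro integral_mono Bochner_Integration.integrable_sum integrable_norm f_integrable
          integrable_exp_abs_mult[OF mgf t]) (auto simp: f_def power_abs)
    finally show "(\<Sum>k\<le>n. \<integral>\<omega>. norm (f k \<omega>) \<partial>M) \<le> (\<integral>\<omega>. exp \<bar>t * Y \<omega>\<bar> \<partial>M)" .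
  qed simp
  have "(\<lambda>k. integral\<^sup>L M (f k)) sums (\<integral>\<omega>. (\<Sum>k. f k \<omega>) \<partial>M)"
    using f_integrable norm_summable integral_norm_summable by (intro sums_integral) auto
  moreover have "(\<Sum>k. f k \<omega>) = exp (t * Y \<omega>)" for \<omega>
    using f_sums by (simp add: sums_iff)
  ultimately show ?thesis
    by (simp add: mgf_def f_eq mult.commute)
qed

lemma mgf_has_fps_expansion:
  fixes Y :: "'a \<Rightarrow> real"
  assumes Y: "Y \<in> borel_measurable M" and "r > 0"
    and mgf: "\<And>t. \<bar>t\<bar> < r \<Longrightarrow> integrable M (\<lambda>\<omega>. exp (t * Y \<omega>))"
  shows "mgf M Y has_fps_expansion moment_fps M Y"
proof -
  have eval_eq: "eval_fps (moment_fps M Y) t = mgf M Y t" if "t \<in> ball 0 r" for t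
    using mgf_sums_moments[OF Y \<open>r > 0\<close> mgf, of t] that
    by (simp add: moment_fps_def eval_fps_def sums_iff)
  have "summable (\<lambda>k. fps_nth (moment_fps M Y) k * (r / 2) ^ k)"
    using mgf_sums_moments[OF Y \<open>r > 0\<close> mgf, of "r / 2"] \<open>r > 0\<close>
    by (simp add: moment_fps_def sums_iff)
  hence "ereal (r / 2) \<le> fps_conv_radius (moment_fps M Y)"
    unfolding fps_conv_radius_def using \<open>r > 0\<close> by (metis conv_radius_geI real_norm_def abs_of_pos half_gt_zero)
  hence "fps_conv_radius (moment_fps M Y) > 0"
    using \<open>r > 0\<close> by (metis ereal_less(2) half_gt_zero less_le_trans)
  moreover have "eventually (\<lambda>t. t \<in> ball 0 r) (nhds (0::real))"
    using \<open>r > 0\<close> by (intro eventually_nhds_in_open) auto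
  ultimately show ?thesis
    unfolding has_fps_expansion_def by (auto elim!: eventually_mono intro: eval_eq)
qed

lemma mgf_fps_eq_moment_fps:
  fixes Y :: "'a \<Rightarrow> real"
  assumes "Y \<in> borel_measurable M" and "r > 0"
    and "\<And>t. \<bar>t\<bar> < r \<Longrightarrow> integrable M (\<lambda>\<omega>. exp (t * Y \<omega>))"
  shows "mgf_fps M Y = moment_fps M Y"
  using fps_nth_has_fps_expansion[OF mgf_has_fps_expansion[OF assms]]
  by (intro fps_ext) (simp add: mgf_fps_def)

lemma moment_fps_zero: "moment_fps M (\<lambda>_. 0) = 1"
  by (intro fps_ext) (simp add: moment_fps_def prob_space power_0_left)

lemma indep_var_powers:
  fixes X Z :: "'a \<Rightarrow> real"
  assumes "indep_var borel X borel Z"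
  shows "indep_var borel (\<lambda>\<omega>. X \<omega> ^ a) borel (\<lambda>\<omega>. Z \<omega> ^ b)"
  using indep_var_compose[OF assms, of "\<lambda>z. z ^ a" borel "\<lambda>z. z ^ b" borel]
  by (simp add: comp_def)

lemma
  fixes X Z :: "'a \<Rightarrow> real"
  assumes indep: "indep_var borel X borel Z"
    and X: "\<And>k. integrable M (\<lambda>\<omega>. X \<omega> ^ k)" and Z: "\<And>k. integrable M (\<lambda>\<omega>. Z \<omega> ^ k)"
  shows integrable_power_add_indep: "integrable M (\<lambda>\<omega>. (X \<omega> + Z \<omega>) ^ n)"
    and moment_fps_add_indep: "moment_fps M (\<lambda>\<omega>. X \<omega> + Z \<omega>) = moment_fps M X * moment_fps M Z"
proof -
  note indep_powers = indep_var_powers[OF indep]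
  have binomial_expansion: "(\<lambda>\<omega>. (X \<omega> + Z \<omega>) ^ n) =
      (\<lambda>\<omega>. \<Sum>a\<le>n. real (n choose a) * (X \<omega> ^ a * Z \<omega> ^ (n - a)))" for n
    by (simp add: binomial_ring fun_eq_iff mult_ac)
  show "integrable M (\<lambda>\<omega>. (X \<omega> + Z \<omega>) ^ n)" for n
    unfolding binomial_expansion using indep_var_integrable[OF indep_powers X Z]
    by (intro Bochner_Integration.integrable_sum integrable_mult_right) auto
  show "moment_fps M (\<lambda>\<omega>. X \<omega> + Z \<omega>) = moment_fps M X * moment_fps M Z"
  proof (rule fps_ext)
    fix n
    have "(\<integral>\<omega>. (X \<omega> + Z \<omega>) ^ n \<partial>M) =
        (\<Sum>a\<le>n. real (n choose a) * ((\<integral>\<omega>. X \<omega> ^ a \<partial>M) * (\<integral>\<omega>. Z \<omega> ^ (n - a) \<partial>M)))"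
      unfolding binomial_expansion
      using indep_var_integrable[OF indep_powers X Z] indep_var_lebesgue_integral[OF indep_powers X Z]
      by (subst Bochner_Integration.integral_sum) auto
    thus "fps_nth (moment_fps M (\<lambda>\<omega>. X \<omega> + Z \<omega>)) n = fps_nth (moment_fps M X * moment_fps M Z) n"
      by (simp add: moment_fps_def fps_mult_nth atLeast0AtMost binomial_fact sum_divide_distrib
          field_simps)
  qed
qed

lemma indep_var_partial_sum_Suc:
  assumes "indep_vars (\<lambda>_. borel) Ys {1..}"
  shows "indep_var borel (partial_sum Ys i) borel (Ys (Suc i))"
proof -
  have "indep_var (PiM {1..i} (\<lambda>_. borel)) (\<lambda>\<omega>. restrict (\<lambda>j. Ys j \<omega>) {1..i})
                  (PiM {Suc i} (\<lambda>_. borel)) (\<lambda>\<omega>. restrict (\<lambda>j. Ys j \<omega>) {Suc i})"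
    using assms by (rule indep_var_restrict) auto
  moreover have "(\<lambda>f. \<Sum>j\<in>{1..i}. f j) \<in> borel_measurable (PiM {1..i} (\<lambda>_. borel :: real measure))"
    by measurable
  moreover have "(\<lambda>f. f (Suc i)) \<in> borel_measurable (PiM {Suc i} (\<lambda>_. borel :: real measure))"
    by measurable
  ultimately have "indep_var borel ((\<lambda>f. \<Sum>j\<in>{1..i}. f j) \<circ> (\<lambda>\<omega>. restrict (\<lambda>j. Ys j \<omega>) {1..i}))
      borel ((\<lambda>f. f (Suc i)) \<circ> (\<lambda>\<omega>. restrict (\<lambda>j. Ys j \<omega>) {Suc i}))"
    by (rule indep_var_compose)
  thus ?thesis by (simp add: comp_def partial_sum_def [abs_def])
qed

lemma integrable_partial_sum_power:
  assumes "indep_vars (\<lambda>_. borel) Ys {1..}"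
    and "\<And>j k. j \<ge> 1 \<Longrightarrow> integrable M (\<lambda>\<omega>. Ys j \<omega> ^ k)"
  shows "integrable M (\<lambda>\<omega>. partial_sum Ys i \<omega> ^ n)"
proof (induction i arbitrary: n)
  case (Suc i)
  thus ?case
    unfolding partial_sum_Suc using assms
    by (intro integrable_power_add_indep indep_var_partial_sum_Suc) auto
qed (simp add: power_0_left)

lemma moment_fps_partial_sum:
  assumes "indep_vars (\<lambda>_. borel) Ys {1..}"
    and "\<And>j k. j \<ge> 1 \<Longrightarrow> integrable M (\<lambda>\<omega>. Ys j \<omega> ^ k)"
    and "\<And>j. j \<ge> 1 \<Longrightarrow> moment_fps M (Ys j) = F"
  shows "moment_fps M (partial_sum Ys i) = F ^ i"
proof (induction i)
  case (Suc i)
  have "moment_fps M (partial_sum Ys (Suc i)) = moment_fps M (partial_sum Ys i) * moment_fps M (Ys (Suc i))"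
    unfolding partial_sum_Suc using assms
    by (intro moment_fps_add_indep indep_var_partial_sum_Suc integrable_partial_sum_power) auto
  thus ?case using Suc.IH assms(3) by (simp add: mult.commute)
qed (simp add: moment_fps_zero)

end

theorem theorem2p1:
  fixes M :: "'a measure" and Y :: "'a \<Rightarrow> real" and Ys :: "nat \<Rightarrow> 'a \<Rightarrow> real"
    and r0 :: real and x y :: real and n :: nat
  assumes "prob_space M"
    and "Y \<in> borel_measurable M"
    and "r0 > 0"
    and "\<And>t. \<bar>t\<bar> < r0 \<Longrightarrow> integrable M (\<lambda>\<omega>. exp (t * Y \<omega>))"
    and "prob_space.indep_vars M (\<lambda>_. borel) Ys {1..}"
    and "\<And>j. j \<ge> 1 \<Longrightarrow> Ys j \<in> borel_measurable M"
    and "\<And>j. j \<ge> 1 \<Longrightarrow> distr M borel (Ys j) = distr M borel Y"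
  shows "prob_bell M Y n x y = (\<Sum>k=0..n. prob_stirling M Ys n k * falling_fact x k * y ^ k)"
proof -
  interpret prob_space M by fact
  have moments_Ys: "integrable M (\<lambda>\<omega>. Ys j \<omega> ^ k)" if "j \<ge> 1" for j k
    using integrable_power_if_mgf[OF assms(2-4)] assms(2,6,7) that
      integrable_comp_eq_if_distr_eq[of "Ys j" M Y "\<lambda>z. z ^ k"] by auto
  have "moment_fps M (partial_sum Ys i) = moment_fps M Y ^ i" for i
    using assms(2,5-7) moments_Ys
    by (intro moment_fps_partial_sum moment_fps_eq_if_distr_eq) auto
  hence moment_power: "fps_nth (moment_fps M Y ^ i) n = (\<integral>\<omega>. partial_sum Ys i \<omega> ^ n \<partial>M) / fact n" for i
    by (metis fps_nth_Abs_fps moment_fps_def)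
  have "prob_bell M Y n x y = fact n * fps_nth (fps_binomial x oo (fps_const y * (moment_fps M Y - 1))) n"
    using mgf_fps_eq_moment_fps[OF assms(2-4)] by (simp add: prob_bell_def bell_gf_def)
  also have "\<dots> = (\<Sum>k=0..n. prob_stirling M Ys n k * falling_fact x k * y ^ k)"
    by (simp add: fps_nth_binomial_compose moment_power prob_stirling_def flip: falling_fact_div_fact)
      (simp add: sum_distrib_left sum_divide_distrib atLeast0AtMost field_simps)
  finally show ?thesis .
qed

end
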